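(* Let $G$ and $H$ be connected nontrivial graphs of orders $n_1$ and $n_2$, respectively. If the vertex set of $G_{SR}$ can be partitioned into $\beta(G_{SR})$ cliques, then $$dim_s(G\boxtimes H) = n_2\cdot dim_s(G) + n_1\cdot dim_s(H) - dim_s(G)\cdot dim_s(H).$$
   Context: For a connected graph $G$ with shortest-path distance $d_G$, a vertex $w$ strongly resolves $u,v$ if $d_G(w,u)=d_G(w,v)+d_G(v,u)$ or $d_G(w,v)=d_G(w,u)+d_G(u,v)$; $dim_s(G)$ is the minimum cardinality of a set $S\subseteq V(G)$ such that every pair of vertices is strongly resolved by some vertex of $S$. A vertex $u$ is maximally distant from $v$ if every neighbor $w$ of $u$ satisfies $d_G(v,w)\le d_G(u,v)$; $u,v$ are mutually maximally distant if each is maximally distant from the other. The strong resolving graph $G_{SR}$ has vertex set $V(G)$, with $u,v$ adjacent iff mutually maximally distant in $G$. $\beta$ denotes the independence number; a clique is a set of pairwise adjacent vertices. The strong product $G\boxtimes H$ has vertex set $V(G)\times V(H)$, with $(a,b)\sim(c,d)$ iff ($a=c$ and $bd\in E(H)$) or ($ac\in E(G)$ and $b=d$) or ($ac\in E(G)$ and $bd\in E(H)$). Nontrivial means at least two vertices. *)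

theory Defs
  imports Main "HOL-Library.Disjoint_Sets"
begin

definition graph :: "'a set \<Rightarrow> ('a \<Rightarrow> 'a \<Rightarrow> bool) \<Rightarrow> bool" where
  "graph V E \<longleftrightarrow> finite V \<and> V \<noteq> {} \<and>
     (\<forall>u v. E u v \<longrightarrow> u \<in> V \<and> v \<in> V) \<and>
     (\<forall>u v. E u v \<longrightarrow> E v u) \<and> (\<forall>u. \<not> E u u)"

definition walk :: "'a set \<Rightarrow> ('a \<Rightarrow> 'a \<Rightarrow> bool) \<Rightarrow> 'a list \<Rightarrow> bool" where
  "walk V E xs \<longleftrightarrow> xs \<noteq> [] \<and> set xs \<subseteq> V \<and>
     (\<forall>i. Suc i < length xs \<longrightarrow> E (xs ! i) (xs ! Suc i))"

definition connected_graph :: "'a set \<Rightarrow> ('a \<Rightarrow> 'a \<Rightarrow> bool) \<Rightarrow> bool" where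
  "connected_graph V E \<longleftrightarrow> graph V E \<and>
     (\<forall>u\<in>V. \<forall>v\<in>V. \<exists>xs. walk V E xs \<and> hd xs = u \<and> last xs = v)"

definition gdist :: "'a set \<Rightarrow> ('a \<Rightarrow> 'a \<Rightarrow> bool) \<Rightarrow> 'a \<Rightarrow> 'a \<Rightarrow> nat" where
  "gdist V E u v = (LEAST n. \<exists>xs. walk V E xs \<and> hd xs = u \<and> last xs = v \<and> length xs = Suc n)"

definition strongly_resolves :: "'a set \<Rightarrow> ('a \<Rightarrow> 'a \<Rightarrow> bool) \<Rightarrow> 'a \<Rightarrow> 'a \<Rightarrow> 'a \<Rightarrow> bool" where
  "strongly_resolves V E w u v \<longleftrightarrow>
     gdist V E w u = gdist V E w v + gdist V E v u \<or>
     gdist V E w v = gdist V E w u + gdist V E u v"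

definition strong_resolving_set :: "'a set \<Rightarrow> ('a \<Rightarrow> 'a \<Rightarrow> bool) \<Rightarrow> 'a set \<Rightarrow> bool" where
  "strong_resolving_set V E S \<longleftrightarrow> S \<subseteq> V \<and>
     (\<forall>u\<in>V. \<forall>v\<in>V. \<exists>w\<in>S. strongly_resolves V E w u v)"

definition sdim :: "'a set \<Rightarrow> ('a \<Rightarrow> 'a \<Rightarrow> bool) \<Rightarrow> nat" where
  "sdim V E = (LEAST k. \<exists>S. strong_resolving_set V E S \<and> card S = k)"

definition maximally_distant :: "'a set \<Rightarrow> ('a \<Rightarrow> 'a \<Rightarrow> bool) \<Rightarrow> 'a \<Rightarrow> 'a \<Rightarrow> bool" where
  "maximally_distant V E u v \<longleftrightarrow> (\<forall>w. E u w \<longrightarrow> gdist V E v w \<le> gdist V E u v)"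

definition mutually_maximally_distant :: "'a set \<Rightarrow> ('a \<Rightarrow> 'a \<Rightarrow> bool) \<Rightarrow> 'a \<Rightarrow> 'a \<Rightarrow> bool" where
  "mutually_maximally_distant V E u v \<longleftrightarrow> maximally_distant V E u v \<and> maximally_distant V E v u"

definition sr_adj :: "'a set \<Rightarrow> ('a \<Rightarrow> 'a \<Rightarrow> bool) \<Rightarrow> 'a \<Rightarrow> 'a \<Rightarrow> bool" where
  "sr_adj V E u v \<longleftrightarrow> u \<in> V \<and> v \<in> V \<and> u \<noteq> v \<and> mutually_maximally_distant V E u v"

definition independent_set :: "'a set \<Rightarrow> ('a \<Rightarrow> 'a \<Rightarrow> bool) \<Rightarrow> 'a set \<Rightarrow> bool" where
  "independent_set V E I \<longleftrightarrow> I \<subseteq> V \<and> (\<forall>u\<in>I. \<forall>v\<in>I. \<not> E u v)"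

definition independence_number :: "'a set \<Rightarrow> ('a \<Rightarrow> 'a \<Rightarrow> bool) \<Rightarrow> nat" where
  "independence_number V E = Max (card ` {I. independent_set V E I})"

definition clique :: "'a set \<Rightarrow> ('a \<Rightarrow> 'a \<Rightarrow> bool) \<Rightarrow> 'a set \<Rightarrow> bool" where
  "clique V E C \<longleftrightarrow> C \<subseteq> V \<and> (\<forall>u\<in>C. \<forall>v\<in>C. u \<noteq> v \<longrightarrow> E u v)"

definition strong_prod_adj :: "('a \<Rightarrow> 'a \<Rightarrow> bool) \<Rightarrow> ('b \<Rightarrow> 'b \<Rightarrow> bool) \<Rightarrow> 'a \<times> 'b \<Rightarrow> 'a \<times> 'b \<Rightarrow> bool" where
  "strong_prod_adj E1 E2 x y \<longleftrightarrow>
     (fst x = fst y \<and> E2 (snd x) (snd y)) \<or>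
     (E1 (fst x) (fst y) \<and> snd x = snd y) \<or>
     (E1 (fst x) (fst y) \<and> E2 (snd x) (snd y))"

end

theory Submission
  imports Defs
begin

text \<open>
  By a theorem of Oellermann and Peters-Fransen, the strong resolving sets of a nontrivial
  connected graph are exactly the vertex covers of its strong resolving graph, so
  \<open>dim\<^sub>s(G) = n - \<beta>(G\<^sub>S\<^sub>R)\<close>.
  Distances in \<open>G \<boxtimes> H\<close> are maxima of the coordinate distances. Consequently \<open>(a,b)\<close> and
  \<open>(c,d)\<close> are mutually maximally distant whenever each coordinate pair is either equal or mutually
  maximally distant, and only if at least one coordinate pair is mutually maximally distant.
  The first fact makes \<open>I\<^sub>1 \<times> I\<^sub>2\<close> independent for independent \<open>I\<^sub>1, I\<^sub>2\<close>; the second shows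
  that an independent set meets each layer \<open>C \<times> V(H)\<close> over a clique \<open>C\<close> of \<open>G\<^sub>S\<^sub>R\<close> in at most
  \<open>\<beta>(H\<^sub>S\<^sub>R)\<close> vertices. Covering \<open>V(G)\<close> by \<open>\<beta>(G\<^sub>S\<^sub>R)\<close> such cliques gives
  \<open>\<beta>((G \<boxtimes> H)\<^sub>S\<^sub>R) = \<beta>(G\<^sub>S\<^sub>R) \<beta>(H\<^sub>S\<^sub>R)\<close>, and the formula is arithmetic.
\<close>

definition walk_of_length :: "'a set \<Rightarrow> ('a \<Rightarrow> 'a \<Rightarrow> bool) \<Rightarrow> nat \<Rightarrow> 'a \<Rightarrow> 'a \<Rightarrow> bool" where
  "walk_of_length V E n u v \<longleftrightarrow> (\<exists>xs. walk V E xs \<and> hd xs = u \<and> last xs = v \<and> length xs = Suc n)"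

definition reachable_within :: "'a set \<Rightarrow> ('a \<Rightarrow> 'a \<Rightarrow> bool) \<Rightarrow> nat \<Rightarrow> 'a \<Rightarrow> 'a \<Rightarrow> bool" where
  "reachable_within V E k u v \<longleftrightarrow> (\<exists>n\<le>k. walk_of_length V E n u v)"

lemma walk_Cons_iff:
  assumes "ys \<noteq> []"
  shows "walk V E (u # ys) \<longleftrightarrow> u \<in> V \<and> E u (hd ys) \<and> walk V E ys"
proof
  assume w: "walk V E (u # ys)"
  have "E ((u # ys) ! i) ((u # ys) ! Suc i)" if "Suc i < length (u # ys)" for i
    using w that unfolding walk_def by blast
  from this[of 0] this[of "Suc _"] show "u \<in> V \<and> E u (hd ys) \<and> walk V E ys"
    using w assms by (auto simp: walk_def hd_conv_nth)
next
  assume "u \<in> V \<and> E u (hd ys) \<and> walk V E ys"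
  then show "walk V E (u # ys)"
    using assms by (auto simp: walk_def hd_conv_nth nth_Cons split: nat.split)
qed

lemma walk_of_length_0_iff: "walk_of_length V E 0 u v \<longleftrightarrow> u = v \<and> u \<in> V"
  by (auto simp: walk_of_length_def walk_def length_Suc_conv intro!: exI[of _ "[u]"])

lemma walk_of_length_Suc_iff:
  "walk_of_length V E (Suc n) u v \<longleftrightarrow> u \<in> V \<and> (\<exists>w. E u w \<and> walk_of_length V E n w v)"
proof
  assume "walk_of_length V E (Suc n) u v"
  then obtain ys where "walk V E (u # ys)" "last (u # ys) = v" "length ys = Suc n"
    unfolding walk_of_length_def by (auto simp: length_Suc_conv)
  moreover from this have "ys \<noteq> []" by auto
  ultimately show "u \<in> V \<and> (\<exists>w. E u w \<and> walk_of_length V E n w v)"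
    unfolding walk_of_length_def by (auto simp: walk_Cons_iff)
next
  assume "u \<in> V \<and> (\<exists>w. E u w \<and> walk_of_length V E n w v)"
  then obtain ys where "u \<in> V" "E u (hd ys)" "walk V E ys" "last ys = v" "length ys = Suc n"
    unfolding walk_of_length_def by blast
  moreover from this have "ys \<noteq> []" by auto
  ultimately show "walk_of_length V E (Suc n) u v"
    unfolding walk_of_length_def by (intro exI[of _ "u # ys"]) (simp add: walk_Cons_iff)
qed

lemma reachable_within_0_iff: "reachable_within V E 0 u v \<longleftrightarrow> u = v \<and> u \<in> V"
  by (simp add: reachable_within_def walk_of_length_0_iff)

lemma reachable_within_Suc_iff:
  "reachable_within V E (Suc k) u v \<longleftrightarrow>
     u \<in> V \<and> (\<exists>u'. (u' = u \<or> E u u') \<and> reachable_within V E k u' v)"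
proof
  assume "reachable_within V E (Suc k) u v"
  then obtain n where n: "n \<le> Suc k" "walk_of_length V E n u v"
    unfolding reachable_within_def by blast
  show "u \<in> V \<and> (\<exists>u'. (u' = u \<or> E u u') \<and> reachable_within V E k u' v)"
  proof (cases n)
    case 0
    then show ?thesis using n unfolding reachable_within_def by (metis zero_le walk_of_length_0_iff)
  next
    case (Suc m)
    then show ?thesis using n by (auto simp: reachable_within_def walk_of_length_Suc_iff)
  qed
next
  assume "u \<in> V \<and> (\<exists>u'. (u' = u \<or> E u u') \<and> reachable_within V E k u' v)"
  then show "reachable_within V E (Suc k) u v"
    unfolding reachable_within_def
    by (metis Suc_le_mono le_SucI walk_of_length_Suc_iff)
qed

lemma connected_graph_iff_reachable_within:
  "connected_graph V E \<longleftrightarrow> graph V E \<and> (\<forall>u\<in>V. \<forall>v\<in>V. \<exists>k. reachable_within V E k u v)"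
proof -
  have "(\<exists>xs. walk V E xs \<and> hd xs = u \<and> last xs = v) \<longleftrightarrow> (\<exists>n. walk_of_length V E n u v)" for u v
    unfolding walk_of_length_def walk_def by (metis Suc_pred length_greater_0_conv)
  then show ?thesis
    unfolding connected_graph_def reachable_within_def by blast
qed

lemma finite_independent_sets: "finite V \<Longrightarrow> finite {I. independent_set V R I}"
  by (rule finite_subset[of _ "Pow V"]) (auto simp: independent_set_def)

lemma card_le_independence_number:
  "finite V \<Longrightarrow> independent_set V R I \<Longrightarrow> card I \<le> independence_number V R"
  unfolding independence_number_def by (rule Max_ge) (auto intro: finite_independent_sets)

lemma ex_maximum_independent_set:
  assumes "finite V"
  obtains I where "independent_set V R I" "card I = independence_number V R"
proof -
  have "independent_set V R {}" by (simp add: independent_set_def)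
  then have "independence_number V R \<in> card ` {I. independent_set V R I}"
    unfolding independence_number_def using finite_independent_sets[OF assms] by (intro Max_in) auto
  then show ?thesis using that by auto
qed

lemma independence_number_le_card: "finite V \<Longrightarrow> independence_number V R \<le> card V"
  by (metis ex_maximum_independent_set card_mono independent_set_def)

lemma ex_max_on_finite:
  fixes f :: "'a \<Rightarrow> nat"
  assumes "finite A" "a \<in> A"
  obtains x where "x \<in> A" "\<forall>y\<in>A. f y \<le> f x"
  using assms ex_has_greatest_nat[of "\<lambda>x. x \<in> A" a f "Suc (Max (f ` A))"]
  by (metis Max_ge finite_imageI image_eqI le_imp_less_Suc)

text \<open>
  Weaker than \<open>connected_graph V E\<close>: edges need not lie inside \<open>V\<close>, they only may not leave it.
  This is what \<open>strong_prod_adj\<close> provides, whose edges are not restricted to \<open>V1 \<times> V2\<close>.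
\<close>
locale conn_graph =
  fixes V :: "'a set" and E :: "'a \<Rightarrow> 'a \<Rightarrow> bool"
  assumes finite_V: "finite V"
    and adj_closed: "u \<in> V \<Longrightarrow> E u v \<Longrightarrow> v \<in> V"
    and adj_sym: "E u v \<Longrightarrow> E v u"
    and ex_reachable_within: "u \<in> V \<Longrightarrow> v \<in> V \<Longrightarrow> \<exists>k. reachable_within V E k u v"

lemma conn_graph_if_connected_graph: "connected_graph V E \<Longrightarrow> conn_graph V E"
  unfolding conn_graph_def connected_graph_iff_reachable_within graph_def by blast

context conn_graph
begin

lemma gdist_le_iff_reachable_within:
  assumes "u \<in> V" "v \<in> V"
  shows "gdist V E u v \<le> k \<longleftrightarrow> reachable_within V E k u v"
proof -
  have gdist: "gdist V E u v = (LEAST n. walk_of_length V E n u v)"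
    unfolding gdist_def walk_of_length_def ..
  obtain n where "walk_of_length V E n u v"
    using ex_reachable_within assms unfolding reachable_within_def by blast
  then have "walk_of_length V E (gdist V E u v) u v"
    unfolding gdist by (rule LeastI)
  moreover have "gdist V E u v \<le> m" if "walk_of_length V E m u v" for m
    unfolding gdist using that by (rule Least_le)
  ultimately show ?thesis
    unfolding reachable_within_def using order_trans by blast
qed

lemma gdist_eq_0_iff: "u \<in> V \<Longrightarrow> v \<in> V \<Longrightarrow> gdist V E u v = 0 \<longleftrightarrow> u = v"
  using gdist_le_iff_reachable_within[of u v 0] by (simp add: reachable_within_0_iff)

lemma gdist_self: "u \<in> V \<Longrightarrow> gdist V E u u = 0"
  by (simp add: gdist_eq_0_iff)

lemma gdist_le_Suc_iff:
  assumes "u \<in> V" "v \<in> V"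
  shows "gdist V E u v \<le> Suc k \<longleftrightarrow> (\<exists>u'. (u' = u \<or> E u u') \<and> gdist V E u' v \<le> k)"
  using assms adj_closed
  by (auto simp: gdist_le_iff_reachable_within reachable_within_Suc_iff)

lemma gdist_adj_le_1: "u \<in> V \<Longrightarrow> E u w \<Longrightarrow> gdist V E u w \<le> 1"
  using gdist_le_Suc_iff[of u w 0] adj_closed gdist_self by fastforce

lemma gdist_triangle:
  assumes "u \<in> V" "v \<in> V" "w \<in> V"
  shows "gdist V E u w \<le> gdist V E u v + gdist V E v w"
proof -
  have "\<forall>u\<in>V. gdist V E u v \<le> n \<longrightarrow> gdist V E u w \<le> n + gdist V E v w" for n
  proof (induction n)
    case 0
    then show ?case using gdist_eq_0_iff assms by auto
  next
    case (Suc n)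
    show ?case
    proof (intro ballI impI)
      fix u assume "u \<in> V" "gdist V E u v \<le> Suc n"
      then obtain u' where "u' = u \<or> E u u'" "gdist V E u' v \<le> n"
        using gdist_le_Suc_iff assms by blast
      with Suc.IH \<open>u \<in> V\<close> have "u' = u \<or> E u u'" "gdist V E u' w \<le> n + gdist V E v w"
        using adj_closed by blast+
      then show "gdist V E u w \<le> Suc n + gdist V E v w"
        using gdist_le_Suc_iff[OF \<open>u \<in> V\<close> assms(3)] by auto
    qed
  qed
  then show ?thesis using assms by blast
qed

lemma gdist_swap_le:
  assumes "u \<in> V" "v \<in> V"
  shows "gdist V E v u \<le> gdist V E u v"
proof -
  have "\<forall>u\<in>V. gdist V E u v \<le> n \<longrightarrow> gdist V E v u \<le> n" for n
  proof (induction n)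
    case 0
    then show ?case using gdist_eq_0_iff assms(2) by auto
  next
    case (Suc n)
    show ?case
    proof (intro ballI impI)
      fix u assume "u \<in> V" "gdist V E u v \<le> Suc n"
      then obtain u' where u': "u' = u \<or> E u u'" "gdist V E u' v \<le> n"
        using gdist_le_Suc_iff assms(2) by blast
      then have "u' \<in> V" using \<open>u \<in> V\<close> adj_closed by blast
      have "gdist V E v u \<le> gdist V E v u' + gdist V E u' u"
        using gdist_triangle \<open>u \<in> V\<close> \<open>u' \<in> V\<close> assms(2) by blast
      moreover have "gdist V E v u' \<le> n" using Suc.IH u' \<open>u' \<in> V\<close> by blast
      moreover have "gdist V E u' u \<le> 1"
        using u'(1) gdist_adj_le_1 adj_sym gdist_self \<open>u \<in> V\<close> \<open>u' \<in> V\<close> by fastforce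
      ultimately show "gdist V E v u \<le> Suc n" by simp
    qed
  qed
  then show ?thesis using assms by blast
qed

lemma gdist_sym: "u \<in> V \<Longrightarrow> v \<in> V \<Longrightarrow> gdist V E u v = gdist V E v u"
  using gdist_swap_le by (simp add: antisym)

lemma gdist_step_towards:
  assumes "u \<in> V" "v \<in> V" "u \<noteq> v"
  obtains w where "E u w" "gdist V E w v + 1 = gdist V E u v"
proof -
  have nz: "gdist V E u v \<noteq> 0"
    using gdist_eq_0_iff assms by simp
  then obtain w where w: "w = u \<or> E u w" "gdist V E w v \<le> gdist V E u v - 1"
    using gdist_le_Suc_iff[OF assms(1,2), of "gdist V E u v - 1"] by auto
  with nz have "E u w" by auto
  have "gdist V E u v \<le> gdist V E u w + gdist V E w v"
    using gdist_triangle assms adj_closed \<open>E u w\<close> by blast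
  then show ?thesis
    using that w(2) \<open>E u w\<close> gdist_adj_le_1[OF assms(1) \<open>E u w\<close>] nz by simp
qed

lemma gdist_closed_neighbour_le:
  assumes "a \<in> V" "c \<in> V" "a' = a \<or> E a a'"
  shows "gdist V E c a' \<le> gdist V E a c + 1"
    and "maximally_distant V E a c \<Longrightarrow> gdist V E c a' \<le> gdist V E a c"
proof -
  have "a' \<in> V" using assms adj_closed by blast
  then have "gdist V E c a' \<le> gdist V E a c + gdist V E a a'"
    using gdist_triangle[of c a a'] gdist_sym assms by simp
  then show "gdist V E c a' \<le> gdist V E a c + 1"
    using assms(3) gdist_adj_le_1 gdist_self assms(1) by fastforce
  show "maximally_distant V E a c \<Longrightarrow> gdist V E c a' \<le> gdist V E a c"
    using assms gdist_sym unfolding maximally_distant_def by auto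
qed

lemma maximally_distant_not_on_geodesic:
  assumes "u \<in> V" "v \<in> V" "w \<in> V" "w \<noteq> v" and md: "maximally_distant V E v u"
  shows "gdist V E w u \<noteq> gdist V E w v + gdist V E v u"
proof -
  \<comment> \<open>a step from \<open>v\<close> towards \<open>w\<close> shortens the way to \<open>w\<close> without moving away from \<open>u\<close>\<close>
  obtain x where x: "E v x" "gdist V E x w + 1 = gdist V E v w"
    using gdist_step_towards assms by metis
  then have "x \<in> V" using adj_closed assms(2) by blast
  have "gdist V E u x \<le> gdist V E v u"
    using md x(1) unfolding maximally_distant_def by blast
  moreover have "gdist V E u w \<le> gdist V E u x + gdist V E x w"
    using gdist_triangle assms \<open>x \<in> V\<close> by blast
  moreover have "gdist V E u w = gdist V E w u" "gdist V E v w = gdist V E w v"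
    using gdist_sym assms by blast+
  ultimately show ?thesis
    using x(2) by linarith
qed

lemma strong_resolving_set_covers_sr_adj:
  assumes S: "strong_resolving_set V E S" and uv: "sr_adj V E u v"
  shows "u \<in> S \<or> v \<in> S"
proof (rule ccontr)
  assume "\<not> (u \<in> S \<or> v \<in> S)"
  have V: "u \<in> V" "v \<in> V" and md: "maximally_distant V E u v" "maximally_distant V E v u"
    using uv unfolding sr_adj_def mutually_maximally_distant_def by auto
  obtain w where "w \<in> S" "strongly_resolves V E w u v"
    using S V unfolding strong_resolving_set_def by blast
  moreover have "w \<in> V" using S \<open>w \<in> S\<close> unfolding strong_resolving_set_def by blast
  moreover have "w \<noteq> u" "w \<noteq> v" using \<open>\<not> (u \<in> S \<or> v \<in> S)\<close> \<open>w \<in> S\<close> by auto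
  ultimately show False
    using maximally_distant_not_on_geodesic[of u v w] maximally_distant_not_on_geodesic[of v u w] V md
    unfolding strongly_resolves_def by blast
qed

lemma maximally_distant_of_farthest_extension:
  assumes "p \<in> V" "q \<in> V" "x \<in> V"
    and x: "gdist V E q x = gdist V E q p + gdist V E p x"
    and farthest: "\<forall>z\<in>V. gdist V E q z = gdist V E q p + gdist V E p z \<longrightarrow> gdist V E q z \<le> gdist V E q x"
  shows "maximally_distant V E x q"
  unfolding maximally_distant_def
proof (intro allI impI)
  fix z assume "E x z"
  then have "z \<in> V" "gdist V E x z \<le> 1" using adj_closed gdist_adj_le_1 \<open>x \<in> V\<close> by blast+
  show "gdist V E q z \<le> gdist V E x q"
  proof (rule ccontr)
    \<comment> \<open>then \<open>z\<close> would be a farther extension of the geodesic from \<open>q\<close> through \<open>p\<close>\<close>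
    assume far: "\<not> gdist V E q z \<le> gdist V E x q"
    have "gdist V E q z \<le> gdist V E q x + gdist V E x z"
      and "gdist V E p z \<le> gdist V E p x + gdist V E x z"
      and "gdist V E q z \<le> gdist V E q p + gdist V E p z"
      using gdist_triangle assms \<open>z \<in> V\<close> by blast+
    moreover have "gdist V E x q = gdist V E q x"
      using gdist_sym assms by blast
    ultimately have "gdist V E q z = gdist V E q p + gdist V E p z"
      using far x \<open>gdist V E x z \<le> 1\<close> by linarith
    then have "gdist V E q z \<le> gdist V E q x"
      using farthest \<open>z \<in> V\<close> by blast
    then show False
      using far \<open>gdist V E x q = gdist V E q x\<close> by linarith
  qed
qed

lemma ex_maximally_distant_extension:
  assumes "p \<in> V" "q \<in> V"
  obtains x where "x \<in> V" "gdist V E q x = gdist V E q p + gdist V E p x" "maximally_distant V E x q"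
proof -
  define A where "A = {x\<in>V. gdist V E q x = gdist V E q p + gdist V E p x}"
  have "p \<in> A" unfolding A_def using assms gdist_self by simp
  then obtain x where "x \<in> A" and "\<forall>z\<in>A. gdist V E q z \<le> gdist V E q x"
    using ex_max_on_finite[of A p "gdist V E q"] finite_V unfolding A_def by auto
  then show ?thesis
    using that maximally_distant_of_farthest_extension[OF assms] unfolding A_def by blast
qed

lemma ex_sr_adj_extending_geodesic:
  assumes "u \<in> V" "v \<in> V" "u \<noteq> v"
  obtains x y where "sr_adj V E x y" "x \<in> V" "y \<in> V"
    "gdist V E v x = gdist V E v u + gdist V E u x"
    "gdist V E x y = gdist V E x v + gdist V E v y"
proof -
  obtain x where x: "x \<in> V" "gdist V E v x = gdist V E v u + gdist V E u x"
    and md_xv: "maximally_distant V E x v"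
    using ex_maximally_distant_extension[OF assms(1,2)] by blast
  obtain y where y: "y \<in> V" "gdist V E x y = gdist V E x v + gdist V E v y"
    and md_yx: "maximally_distant V E y x"
    using ex_maximally_distant_extension[OF assms(2) x(1)] by blast
  have md_xy: "maximally_distant V E x y"
    unfolding maximally_distant_def
  proof (intro allI impI)
    fix z assume "E x z"
    then have "z \<in> V" "gdist V E v z \<le> gdist V E x v"
      using adj_closed \<open>x \<in> V\<close> md_xv unfolding maximally_distant_def by blast+
    moreover have "gdist V E y z \<le> gdist V E y v + gdist V E v z"
      using gdist_triangle y assms \<open>z \<in> V\<close> by blast
    moreover have "gdist V E y v = gdist V E v y"
      using gdist_sym y assms by blast
    ultimately show "gdist V E y z \<le> gdist V E x y"
      using y(2) by linarith
  qed
  have "gdist V E v u \<noteq> 0" using gdist_eq_0_iff assms by blast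
  moreover have "gdist V E x v = gdist V E v x"
    using gdist_sym assms x by blast
  ultimately have "gdist V E x y \<noteq> 0"
    using x(2) y(2) by linarith
  then have "x \<noteq> y"
    using gdist_self[OF x(1)] by auto
  then have "sr_adj V E x y"
    unfolding sr_adj_def mutually_maximally_distant_def using x y md_xy md_yx by blast
  then show ?thesis using that x y by blast
qed

lemma sr_adj_cover_resolves:
  assumes S: "\<forall>a b. sr_adj V E a b \<longrightarrow> a \<in> S \<or> b \<in> S"
    and uv: "u \<in> V" "v \<in> V" "u \<noteq> v"
  shows "\<exists>w\<in>S. strongly_resolves V E w u v"
proof -
  \<comment> \<open>\<open>x, u, v, y\<close> lie in this order on a geodesic, so both \<open>x\<close> and \<open>y\<close> resolve \<open>u, v\<close>\<close>
  obtain x y where xy: "sr_adj V E x y" "x \<in> V" "y \<in> V"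
    "gdist V E v x = gdist V E v u + gdist V E u x"
    "gdist V E x y = gdist V E x v + gdist V E v y"
    using ex_sr_adj_extending_geodesic uv by blast
  have sym: "gdist V E u x = gdist V E x u" "gdist V E v x = gdist V E x v"
    "gdist V E y x = gdist V E x y" "gdist V E y v = gdist V E v y" "gdist V E u v = gdist V E v u"
    using gdist_sym xy uv by blast+
  have "strongly_resolves V E x u v"
    using xy(4) sym unfolding strongly_resolves_def by linarith
  moreover have "strongly_resolves V E y u v"
  proof -
    have "gdist V E y x \<le> gdist V E y u + gdist V E u x"
      and "gdist V E y u \<le> gdist V E y v + gdist V E v u"
      using gdist_triangle xy uv by blast+
    then show ?thesis
      using xy(4,5) sym unfolding strongly_resolves_def by linarith
  qed
  ultimately show ?thesis using S xy(1) by blast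
qed

theorem strong_resolving_set_iff_sr_adj_cover:
  assumes "card V \<ge> 2"
  shows "strong_resolving_set V E S \<longleftrightarrow> S \<subseteq> V \<and> (\<forall>a b. sr_adj V E a b \<longrightarrow> a \<in> S \<or> b \<in> S)"
proof
  assume "strong_resolving_set V E S"
  then show "S \<subseteq> V \<and> (\<forall>a b. sr_adj V E a b \<longrightarrow> a \<in> S \<or> b \<in> S)"
    using strong_resolving_set_covers_sr_adj unfolding strong_resolving_set_def by blast
next
  assume S: "S \<subseteq> V \<and> (\<forall>a b. sr_adj V E a b \<longrightarrow> a \<in> S \<or> b \<in> S)"
  have "\<exists>w\<in>S. strongly_resolves V E w u v" if "u \<in> V" "v \<in> V" for u v
  proof (cases "u = v")
    case True
    \<comment> \<open>every vertex resolves \<open>u, u\<close>; \<open>S \<noteq> {}\<close> needs a second vertex\<close>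
    have "\<not> card V \<le> Suc 0" using assms by simp
    then obtain v' where "v' \<in> V" "v' \<noteq> u"
      using \<open>u \<in> V\<close> card_le_Suc0_iff_eq[OF finite_V] by blast
    then obtain w where "w \<in> S" using sr_adj_cover_resolves S \<open>u \<in> V\<close> by blast
    then show ?thesis using True S gdist_self \<open>u \<in> V\<close> unfolding strongly_resolves_def by auto
  qed (use sr_adj_cover_resolves S that in blast)
  then show "strong_resolving_set V E S"
    unfolding strong_resolving_set_def using S by blast
qed

theorem sdim_eq_card_minus_independence_number:
  assumes "card V \<ge> 2"
  shows "sdim V E = card V - independence_number V (sr_adj V E)"
  unfolding sdim_def
proof (rule Least_equality)
  obtain I where I: "independent_set V (sr_adj V E) I" "card I = independence_number V (sr_adj V E)"
    using ex_maximum_independent_set finite_V by blast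
  moreover have "I \<subseteq> V"
    using I(1) unfolding independent_set_def by blast
  ultimately have "strong_resolving_set V E (V - I)"
    unfolding strong_resolving_set_iff_sr_adj_cover[OF assms] independent_set_def sr_adj_def
    by blast
  moreover have "card (V - I) = card V - independence_number V (sr_adj V E)"
    using I(2) \<open>I \<subseteq> V\<close> finite_V by (simp add: card_Diff_subset finite_subset)
  ultimately show "\<exists>S. strong_resolving_set V E S \<and> card S = card V - independence_number V (sr_adj V E)"
    by blast
next
  fix k assume "\<exists>S. strong_resolving_set V E S \<and> card S = k"
  then obtain S where S: "strong_resolving_set V E S" "card S = k" by blast
  then have "independent_set V (sr_adj V E) (V - S)"
    unfolding independent_set_def using strong_resolving_set_covers_sr_adj by blast
  then have "card (V - S) \<le> independence_number V (sr_adj V E)"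
    using card_le_independence_number finite_V by blast
  moreover have "card (V - S) = card V - card S"
    using S(1) finite_V unfolding strong_resolving_set_def by (meson card_Diff_subset finite_subset)
  ultimately show "card V - independence_number V (sr_adj V E) \<le> k"
    using S(2) by linarith
qed

end

lemma strong_prod_adj_closed_iff:
  "(w = (a, b) \<or> strong_prod_adj E1 E2 (a, b) w) \<longleftrightarrow>
   (fst w = a \<or> E1 a (fst w)) \<and> (snd w = b \<or> E2 b (snd w))"
  unfolding strong_prod_adj_def by (cases w) auto

lemma reachable_within_strong_prod_iff:
  "reachable_within (V1 \<times> V2) (strong_prod_adj E1 E2) k (a, b) (c, d) \<longleftrightarrow>
   reachable_within V1 E1 k a c \<and> reachable_within V2 E2 k b d"
proof (induction k arbitrary: a b)
  case 0
  then show ?case by (auto simp: reachable_within_0_iff)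
next
  case (Suc k)
  have "reachable_within (V1 \<times> V2) (strong_prod_adj E1 E2) (Suc k) (a, b) (c, d) \<longleftrightarrow>
     (a, b) \<in> V1 \<times> V2 \<and> (\<exists>a' b'. (a' = a \<or> E1 a a') \<and> (b' = b \<or> E2 b b') \<and>
        reachable_within V1 E1 k a' c \<and> reachable_within V2 E2 k b' d)"
    unfolding reachable_within_Suc_iff strong_prod_adj_closed_iff using Suc.IH by auto
  also have "\<dots> \<longleftrightarrow> reachable_within V1 E1 (Suc k) a c \<and> reachable_within V2 E2 (Suc k) b d"
    unfolding reachable_within_Suc_iff by blast
  finally show ?case .
qed

lemma conn_graph_strong_prod:
  assumes "conn_graph V1 E1" "conn_graph V2 E2"
  shows "conn_graph (V1 \<times> V2) (strong_prod_adj E1 E2)"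
proof
  interpret G: conn_graph V1 E1 by fact
  interpret H: conn_graph V2 E2 by fact
  show "finite (V1 \<times> V2)" using G.finite_V H.finite_V by simp
  show "strong_prod_adj E1 E2 v u" if "strong_prod_adj E1 E2 u v" for u v
    using that G.adj_sym H.adj_sym unfolding strong_prod_adj_def by auto
  show "v \<in> V1 \<times> V2" if "u \<in> V1 \<times> V2" "strong_prod_adj E1 E2 u v" for u v
    using that G.adj_closed H.adj_closed unfolding strong_prod_adj_def by (cases u, cases v) auto
  fix x y assume "x \<in> V1 \<times> V2" "y \<in> V1 \<times> V2"
  then obtain k1 k2 where "reachable_within V1 E1 k1 (fst x) (fst y)" "reachable_within V2 E2 k2 (snd x) (snd y)"
    using G.ex_reachable_within H.ex_reachable_within by (metis mem_Times_iff)
  then have "reachable_within V1 E1 (max k1 k2) (fst x) (fst y)" "reachable_within V2 E2 (max k1 k2) (snd x) (snd y)"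
    unfolding reachable_within_def by (meson max.coboundedI1 max.coboundedI2 order_trans)+
  then show "\<exists>k. reachable_within (V1 \<times> V2) (strong_prod_adj E1 E2) k x y"
    using reachable_within_strong_prod_iff[of V1 V2 E1 E2 _ "fst x" "snd x" "fst y" "snd y"] by auto
qed

locale conn_graph_pair = G: conn_graph V1 E1 + H: conn_graph V2 E2
  for V1 :: "'a set" and E1 and V2 :: "'b set" and E2
begin

abbreviation VP :: "('a \<times> 'b) set" where "VP \<equiv> V1 \<times> V2"
abbreviation EP :: "'a \<times> 'b \<Rightarrow> 'a \<times> 'b \<Rightarrow> bool" where "EP \<equiv> strong_prod_adj E1 E2"

sublocale P: conn_graph VP EP
  using conn_graph_strong_prod G.conn_graph_axioms H.conn_graph_axioms .

lemma gdist_strong_prod: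
  assumes "a \<in> V1" "c \<in> V1" "b \<in> V2" "d \<in> V2"
  shows "gdist VP EP (a, b) (c, d) = max (gdist V1 E1 a c) (gdist V2 E2 b d)"
proof -
  have le_iff: "gdist VP EP (a, b) (c, d) \<le> k \<longleftrightarrow> gdist V1 E1 a c \<le> k \<and> gdist V2 E2 b d \<le> k" for k
    using P.gdist_le_iff_reachable_within[of "(a, b)" "(c, d)" k] G.gdist_le_iff_reachable_within[of a c k]
      H.gdist_le_iff_reachable_within[of b d k] reachable_within_strong_prod_iff[of V1 V2 E1 E2 k a b c d] assms
    by simp
  show ?thesis
    using le_iff[of "max (gdist V1 E1 a c) (gdist V2 E2 b d)"] le_iff[of "gdist VP EP (a, b) (c, d)"]
    by (simp add: antisym)
qed

lemma maximally_distant_strong_prod_iff: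
  assumes V: "a \<in> V1" "c \<in> V1" "b \<in> V2" "d \<in> V2"
  shows "maximally_distant VP EP (a, b) (c, d) \<longleftrightarrow>
     (gdist V2 E2 b d \<le> gdist V1 E1 a c \<longrightarrow> maximally_distant V1 E1 a c) \<and>
     (gdist V1 E1 a c \<le> gdist V2 E2 b d \<longrightarrow> maximally_distant V2 E2 b d)"
    (is "_ \<longleftrightarrow> (?d2 \<le> ?d1 \<longrightarrow> _) \<and> (_ \<longrightarrow> _)")
proof
  assume md: "maximally_distant VP EP (a, b) (c, d)"
  have first: "gdist V1 E1 c a' \<le> max ?d1 ?d2" if "E1 a a'" for a'
  proof -
    have "a' \<in> V1" using that G.adj_closed V(1) by blast
    have "EP (a, b) (a', b)" using that unfolding strong_prod_adj_def by simp
    then have "gdist VP EP (c, d) (a', b) \<le> gdist VP EP (a, b) (c, d)"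
      using md unfolding maximally_distant_def by blast
    then show ?thesis
      using gdist_strong_prod[OF V(2) \<open>a' \<in> V1\<close> V(4,3)] gdist_strong_prod[OF V] by simp
  qed
  have second: "gdist V2 E2 d b' \<le> max ?d1 ?d2" if "E2 b b'" for b'
  proof -
    have "b' \<in> V2" using that H.adj_closed V(3) by blast
    have "EP (a, b) (a, b')" using that unfolding strong_prod_adj_def by simp
    then have "gdist VP EP (c, d) (a, b') \<le> gdist VP EP (a, b) (c, d)"
      using md unfolding maximally_distant_def by blast
    then show ?thesis
      using gdist_strong_prod[OF V(2,1) V(4) \<open>b' \<in> V2\<close>] gdist_strong_prod[OF V] by simp
  qed
  show "(?d2 \<le> ?d1 \<longrightarrow> maximally_distant V1 E1 a c) \<and> (?d1 \<le> ?d2 \<longrightarrow> maximally_distant V2 E2 b d)"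
    unfolding maximally_distant_def
  proof (intro conjI impI allI)
    fix a' assume "?d2 \<le> ?d1" "E1 a a'"
    then show "gdist V1 E1 c a' \<le> ?d1" using first max.absorb1 by metis
  next
    fix b' assume "?d1 \<le> ?d2" "E2 b b'"
    then show "gdist V2 E2 d b' \<le> ?d2" using second max.absorb2 by metis
  qed
next
  assume coord: "(?d2 \<le> ?d1 \<longrightarrow> maximally_distant V1 E1 a c) \<and> (?d1 \<le> ?d2 \<longrightarrow> maximally_distant V2 E2 b d)"
  show "maximally_distant VP EP (a, b) (c, d)"
    unfolding maximally_distant_def
  proof (intro allI impI)
    fix w assume "EP (a, b) w"
    then have nb: "fst w = a \<or> E1 a (fst w)" "snd w = b \<or> E2 b (snd w)"
      using strong_prod_adj_closed_iff[of w a b E1 E2] by simp_all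
    have "fst w \<in> V1" using nb(1) V(1) G.adj_closed by auto
    have "snd w \<in> V2" using nb(2) V(3) H.adj_closed by auto
    \<comment> \<open>a coordinate distance can grow by one only while it is below the other one\<close>
    have "gdist V1 E1 c (fst w) \<le> max ?d1 ?d2"
    proof (cases "?d2 \<le> ?d1")
      case True
      then show ?thesis using coord G.gdist_closed_neighbour_le(2)[OF V(1,2) nb(1)] by simp
    next
      case False
      then have "gdist V1 E1 c (fst w) \<le> ?d2"
        using G.gdist_closed_neighbour_le(1)[OF V(1,2) nb(1)] by linarith
      then show ?thesis by (rule max.coboundedI2)
    qed
    moreover have "gdist V2 E2 d (snd w) \<le> max ?d1 ?d2"
    proof (cases "?d1 \<le> ?d2")
      case True
      then show ?thesis using coord H.gdist_closed_neighbour_le(2)[OF V(3,4) nb(2)] by simp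
    next
      case False
      then have "gdist V2 E2 d (snd w) \<le> ?d1"
        using H.gdist_closed_neighbour_le(1)[OF V(3,4) nb(2)] by linarith
      then show ?thesis by (rule max.coboundedI1)
    qed
    ultimately show "gdist VP EP (c, d) w \<le> gdist VP EP (a, b) (c, d)"
      using gdist_strong_prod[OF V(2) \<open>fst w \<in> V1\<close> V(4) \<open>snd w \<in> V2\<close>] gdist_strong_prod[OF V]
      by simp
  qed
qed

lemma sr_adj_strong_prodD:
  assumes "sr_adj VP EP (a, b) (c, d)"
  shows "sr_adj V1 E1 a c \<or> sr_adj V2 E2 b d"
proof -
  have V: "a \<in> V1" "c \<in> V1" "b \<in> V2" "d \<in> V2" and "(a, b) \<noteq> (c, d)"
    and "maximally_distant VP EP (a, b) (c, d)" "maximally_distant VP EP (c, d) (a, b)"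
    using assms unfolding sr_adj_def mutually_maximally_distant_def by auto
  moreover have "gdist V1 E1 c a = gdist V1 E1 a c" "gdist V2 E2 d b = gdist V2 E2 b d"
    using G.gdist_sym H.gdist_sym V by blast+
  ultimately have
    md_ac: "gdist V2 E2 b d \<le> gdist V1 E1 a c \<Longrightarrow> mutually_maximally_distant V1 E1 a c" and
    md_bd: "gdist V1 E1 a c \<le> gdist V2 E2 b d \<Longrightarrow> mutually_maximally_distant V2 E2 b d"
    using maximally_distant_strong_prod_iff[OF V] maximally_distant_strong_prod_iff[OF V(2,1,4,3)]
    unfolding mutually_maximally_distant_def by auto
  have "a = c \<longleftrightarrow> gdist V1 E1 a c = 0" "b = d \<longleftrightarrow> gdist V2 E2 b d = 0"
    using G.gdist_eq_0_iff H.gdist_eq_0_iff V by auto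
  then show ?thesis
    using md_ac md_bd V \<open>(a, b) \<noteq> (c, d)\<close> unfolding sr_adj_def by (metis le_zero_eq nat_le_linear)
qed

lemma sr_adj_strong_prodI:
  assumes V: "a \<in> V1" "c \<in> V1" "b \<in> V2" "d \<in> V2" and "(a, b) \<noteq> (c, d)"
    and "a = c \<or> sr_adj V1 E1 a c" and "b = d \<or> sr_adj V2 E2 b d"
  shows "sr_adj VP EP (a, b) (c, d)"
proof -
  have "a = c \<longleftrightarrow> gdist V1 E1 a c = 0" "b = d \<longleftrightarrow> gdist V2 E2 b d = 0"
    using G.gdist_eq_0_iff H.gdist_eq_0_iff V by auto
  \<comment> \<open>the larger coordinate distance is positive, so that coordinate pair is mutually maximally distant\<close>
  then have
    md_ac: "gdist V2 E2 b d \<le> gdist V1 E1 a c \<Longrightarrow> mutually_maximally_distant V1 E1 a c" and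
    md_bd: "gdist V1 E1 a c \<le> gdist V2 E2 b d \<Longrightarrow> mutually_maximally_distant V2 E2 b d"
    using assms(5-7) unfolding sr_adj_def by (metis le_zero_eq prod.inject)+
  moreover have "gdist V1 E1 c a = gdist V1 E1 a c" "gdist V2 E2 d b = gdist V2 E2 b d"
    using G.gdist_sym H.gdist_sym V by blast+
  ultimately have "maximally_distant VP EP (a, b) (c, d)" "maximally_distant VP EP (c, d) (a, b)"
    using maximally_distant_strong_prod_iff[OF V] maximally_distant_strong_prod_iff[OF V(2,1,4,3)]
    unfolding mutually_maximally_distant_def by auto
  then show ?thesis
    using V assms(5) unfolding sr_adj_def mutually_maximally_distant_def by auto
qed

lemma independence_number_strong_prod_ge:
  "independence_number V1 (sr_adj V1 E1) * independence_number V2 (sr_adj V2 E2)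
     \<le> independence_number VP (sr_adj VP EP)"
proof -
  obtain I1 where I1: "independent_set V1 (sr_adj V1 E1) I1" "card I1 = independence_number V1 (sr_adj V1 E1)"
    using ex_maximum_independent_set G.finite_V by blast
  obtain I2 where I2: "independent_set V2 (sr_adj V2 E2) I2" "card I2 = independence_number V2 (sr_adj V2 E2)"
    using ex_maximum_independent_set H.finite_V by blast
  have "independent_set VP (sr_adj VP EP) (I1 \<times> I2)"
    using I1(1) I2(1) sr_adj_strong_prodD unfolding independent_set_def by fast
  then have "card (I1 \<times> I2) \<le> independence_number VP (sr_adj VP EP)"
    using card_le_independence_number P.finite_V by blast
  then show ?thesis
    using I1(2) I2(2) by (simp add: card_cartesian_product)
qed

lemma card_independent_inter_layer_le:
  assumes J: "independent_set VP (sr_adj VP EP) J" and C: "clique V1 (sr_adj V1 E1) C"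
  shows "card (J \<inter> (C \<times> V2)) \<le> independence_number V2 (sr_adj V2 E2)"
proof -
  let ?K = "J \<inter> (C \<times> V2)"
  \<comment> \<open>within the layer the first coordinates are equal or adjacent in \<open>G\<^sub>S\<^sub>R\<close>\<close>
  have apart: "snd x \<noteq> snd y \<and> \<not> sr_adj V2 E2 (snd x) (snd y)"
    if "x \<in> ?K" "y \<in> ?K" "x \<noteq> y" for x y
  proof -
    obtain a b c d where xy: "x = (a, b)" "y = (c, d)" by (cases x, cases y)
    have V: "a \<in> V1" "c \<in> V1" "b \<in> V2" "d \<in> V2"
      using that xy C unfolding clique_def by auto
    have "a = c \<or> sr_adj V1 E1 a c" using C that xy unfolding clique_def by auto
    moreover have "\<not> sr_adj VP EP x y" using J that unfolding independent_set_def by blast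
    ultimately show ?thesis
      using sr_adj_strong_prodI[OF V] that xy by auto
  qed
  then have "inj_on snd ?K"
    by (meson inj_onI)
  moreover have "independent_set V2 (sr_adj V2 E2) (snd ` ?K)"
    unfolding independent_set_def
  proof (intro conjI ballI)
    show "snd ` ?K \<subseteq> V2" by auto
    fix u v assume "u \<in> snd ` ?K" "v \<in> snd ` ?K"
    then obtain x y where "x \<in> ?K" "y \<in> ?K" "u = snd x" "v = snd y" by blast
    then show "\<not> sr_adj V2 E2 u v"
      using apart[of x y] by (cases "x = y") (auto simp: sr_adj_def)
  qed
  then have "card (snd ` ?K) \<le> independence_number V2 (sr_adj V2 E2)"
    using card_le_independence_number H.finite_V by blast
  ultimately show ?thesis by (simp add: card_image)
qed

lemma independence_number_strong_prod_le:
  assumes P: "partition_on V1 P" "\<forall>C\<in>P. clique V1 (sr_adj V1 E1) C"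
  shows "independence_number VP (sr_adj VP EP) \<le> card P * independence_number V2 (sr_adj V2 E2)"
proof -
  obtain J where J: "independent_set VP (sr_adj VP EP) J" "card J = independence_number VP (sr_adj VP EP)"
    using ex_maximum_independent_set P.finite_V by blast
  have "finite P" using P(1) G.finite_V unfolding partition_on_def by (metis finite_UnionD)
  have "J = (\<Union>C\<in>P. J \<inter> (C \<times> V2))"
    using J(1) P(1) unfolding independent_set_def partition_on_def by auto
  then have "card J \<le> (\<Sum>C\<in>P. card (J \<inter> (C \<times> V2)))"
    using card_UN_le[OF \<open>finite P\<close>] by metis
  also have "\<dots> \<le> card P * independence_number V2 (sr_adj V2 E2)"
    using sum_bounded_above[of P "\<lambda>C. card (J \<inter> (C \<times> V2))"] card_independent_inter_layer_le[OF J(1)] P(2)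
    by simp
  finally show ?thesis using J(2) by simp
qed

end

theorem theorem15:
  fixes V1 :: "'a set" and E1 :: "'a \<Rightarrow> 'a \<Rightarrow> bool"
    and V2 :: "'b set" and E2 :: "'b \<Rightarrow> 'b \<Rightarrow> bool"
  assumes "connected_graph V1 E1" and "card V1 \<ge> 2"
    and "connected_graph V2 E2" and "card V2 \<ge> 2"
    and "\<exists>P. partition_on V1 P \<and> card P = independence_number V1 (sr_adj V1 E1)
              \<and> (\<forall>C\<in>P. clique V1 (sr_adj V1 E1) C)"
  shows "int (sdim (V1 \<times> V2) (strong_prod_adj E1 E2))
         = int (card V2) * int (sdim V1 E1) + int (card V1) * int (sdim V2 E2)
           - int (sdim V1 E1) * int (sdim V2 E2)"
proof -
  interpret conn_graph_pair V1 E1 V2 E2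
    using assms(1,3) by (simp add: conn_graph_pair_def conn_graph_if_connected_graph)
  let ?\<beta>1 = "independence_number V1 (sr_adj V1 E1)"
  let ?\<beta>2 = "independence_number V2 (sr_adj V2 E2)"
  have "independence_number VP (sr_adj VP EP) = ?\<beta>1 * ?\<beta>2"
    using assms(5) independence_number_strong_prod_le independence_number_strong_prod_ge
    by (metis le_antisym)
  moreover have "card VP \<ge> 2"
    using assms(2,4) by (simp add: card_cartesian_product) (metis mult_le_mono one_le_numeral le_trans mult.right_neutral)
  ultimately have "sdim VP EP = card V1 * card V2 - ?\<beta>1 * ?\<beta>2"
    using P.sdim_eq_card_minus_independence_number by (simp add: card_cartesian_product)
  moreover have "sdim V1 E1 = card V1 - ?\<beta>1" "sdim V2 E2 = card V2 - ?\<beta>2"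
    using assms(2,4) G.sdim_eq_card_minus_independence_number H.sdim_eq_card_minus_independence_number
    by blast+
  moreover have "?\<beta>1 \<le> card V1" "?\<beta>2 \<le> card V2"
    using independence_number_le_card G.finite_V H.finite_V by blast+
  ultimately show ?thesis
    by (simp add: of_nat_diff mult_le_mono algebra_simps)
qed

end
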